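(* Consider the car-following system with state $x=(D,v,v_{\rm L})\in\mathbb{R}^3$: $$\dot D = v_{\rm L}-v,\qquad \dot v = u - p(v),\qquad \dot v_{\rm L} = a_{\rm L}.$$ Here $p$ is locally Lipschitz with $p(v)\ge0$, and $a_{\rm L}$ is the leader's acceleration, a given exogenous input. The system is driven by the connected cruise controller $$u=k_{\rm d}(x)=A\big(V(D)-v\big)+B\big(W(v_{\rm L})-v\big)+Ca_{\rm L}$$ with $A,B,C\ge 0$, where $$V(D)=\min\{\kappa(D-D_{\rm st}),v_{\rm max}\}, \qquad W(v_{\rm L})=\min\{v_{\rm L},v_{\rm max}\}.$$ The constants satisfy $\kappa>0$, $v_{\rm max}>0$ and $D_{\rm st}\in\mathbb{R}$. Let $D_{\rm sf}\in\mathbb{R}$ and $T_{\rm c}>0$, and set $\bar\kappa=1/T_{\rm c}$. Define $$\mathcal{S}_{\rm D}=\{x: D-D_{\rm sf}\ge0\},\qquad \mathcal{S}_{\rm TTC}=\{x:\bar\kappa(D-D_{\rm sf})+v_{\rm L}-v\ge 0\}.$$ Assume the following: - there is a class-$\mathcal{K}$ function $\gamma$ such that $a_{\rm L}(t)\ge-\gamma(v_{\rm L}(t))$ along the solution; - there is $\bar v\ge0$ such that $v(t),v_{\rm L}(t)\in[0,\bar v]$ along the solution; - $D_{\rm st}>D_{\rm sf}$, $\bar\kappa\ge\kappa$ and $C\le 1$; - the gains satisfy $$A\kappa(D_{\rm st}-D_{\rm sf})+\min\{0,B-\bar\kappa\}\,\bar v+\min_{v_{\rm L}\in[0,\bar v]}\Big[(\bar\kappa-B+A)v_{\rm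 L}-(1-C)\gamma(v_{\rm L})\Big]\ \ge\ 0.$$ Then the closed loop is safe with respect to $\mathcal{S}_{\rm D}\cap\mathcal{S}_{\rm TTC}$: every such solution with $x(0)\in\mathcal{S}_{\rm D}\cap\mathcal{S}_{\rm TTC}$ satisfies $x(t)\in\mathcal{S}_{\rm D}\cap\mathcal{S}_{\rm TTC}$ for all $t\ge 0$.
   Context: A function $\gamma:[0,\infty)\to[0,\infty)$ is of class $\mathcal{K}$ if it is continuous, strictly increasing, and satisfies $\gamma(0)=0$. Standing assumption: solutions of the closed loop system exist and are unique for all $t\ge0$. *)

theory Defs
  imports "HOL-Analysis.Analysis"
begin

definition class_K :: "(real \<Rightarrow> real) \<Rightarrow> bool" where
  "class_K \<gamma> \<longleftrightarrow> continuous_on {0..} \<gamma> \<and> strict_mono_on {0..} \<gamma> \<and> \<gamma> 0 = 0"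

definition locally_lipschitz :: "(real \<Rightarrow> real) \<Rightarrow> bool" where
  "locally_lipschitz p \<longleftrightarrow> (\<forall>x. \<exists>e>0. \<exists>L. L-lipschitz_on (ball x e) p)"

definition Vfun :: "real \<Rightarrow> real \<Rightarrow> real \<Rightarrow> real \<Rightarrow> real" where
  "Vfun \<kappa> Dst vmax D = min (\<kappa> * (D - Dst)) vmax"

definition Wfun :: "real \<Rightarrow> real \<Rightarrow> real" where
  "Wfun vmax vL = min vL vmax"

definition kd :: "real \<Rightarrow> real \<Rightarrow> real \<Rightarrow> real \<Rightarrow> real \<Rightarrow> real \<Rightarrow> real
                  \<Rightarrow> real \<Rightarrow> real \<Rightarrow> real \<Rightarrow> real" where
  "kd A B C \<kappa> Dst vmax D v vL aL =
     A * (Vfun \<kappa> Dst vmax D - v) + B * (Wfun vmax vL - v) + C * aL"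

definition S_D :: "real \<Rightarrow> real \<times> real \<times> real \<Rightarrow> bool" where
  "S_D Dsf x = (case x of (D, v, vL) \<Rightarrow> D - Dsf \<ge> 0)"

definition S_TTC :: "real \<Rightarrow> real \<Rightarrow> real \<times> real \<times> real \<Rightarrow> bool" where
  "S_TTC kbar Dsf x = (case x of (D, v, vL) \<Rightarrow> kbar * (D - Dsf) + vL - v \<ge> 0)"

end

theory Submission
  imports Defs
begin

text \<open>With \<open>h\<^sub>1 = D - D\<^sub>s\<^sub>f\<close> and \<open>h\<^sub>2 = \<kappa>\<^sub>b h\<^sub>1 + v\<^sub>L - v\<close> (\<open>\<kappa>\<^sub>b = 1/T\<^sub>c\<close>) one has
  \<open>h\<^sub>1' = h\<^sub>2 - \<kappa>\<^sub>b h\<^sub>1\<close>, and the gain condition gives \<open>h\<^sub>2' \<ge> A (\<kappa>\<^sub>b - \<kappa>) h\<^sub>1 - A h\<^sub>2\<close> along the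
  closed loop. Both off-diagonal coefficients are nonnegative, so this cooperative system of
  differential inequalities keeps \<open>(h\<^sub>1, h\<^sub>2)\<close> in the nonnegative quadrant.\<close>

lemma nonneg_at_right_endpoint:
  fixes f :: "real \<Rightarrow> real"
  assumes cont: "continuous_on {a..t} f" and "a \<le> t" and "f a \<ge> 0"
    and below: "\<And>s. a \<le> s \<Longrightarrow> s < t \<Longrightarrow> f s \<ge> 0"
  shows "f t \<ge> 0"
proof (cases "a = t")
  case True
  then show ?thesis using \<open>f a \<ge> 0\<close> by simp
next
  case False
  then have "closure {a..<t} = {a..t}" using \<open>a \<le> t\<close> by simp
  then show ?thesis
    using continuous_ge_on_closure[of "{a..<t}" f t 0] cont below \<open>a \<le> t\<close> by auto
qed

lemma ge_of_derivative_ge: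
  fixes f f' :: "real \<Rightarrow> real"
  assumes "a < b"
    and deriv: "\<And>t. a \<le> t \<Longrightarrow> t \<le> b \<Longrightarrow> (f has_real_derivative f' t) (at t within {a..b})"
    and bound: "\<And>t. a < t \<Longrightarrow> t < b \<Longrightarrow> f' t \<ge> L"
  shows "f b \<ge> f a + L * (b - a)"
proof -
  have "\<exists>s\<in>{a<..<b}. f b - f a = f' s * (b - a)"
    by (rule mvt_simple[OF \<open>a < b\<close>, of f "\<lambda>t h. f' t * h"])
      (use deriv in \<open>auto simp: has_field_derivative_def\<close>)
  then obtain s where s: "s \<in> {a<..<b}" and eq: "f b - f a = f' s * (b - a)" by blast
  have "L * (b - a) \<le> f' s * (b - a)"
    using bound s \<open>a < b\<close> by (intro mult_right_mono) auto
  then show ?thesis using eq by linarith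
qed

text \<open>At the first exit time \<open>t\<^sub>0\<close> both components are still nonnegative; if the minimum \<open>m < 0\<close> of both components over a short window \<open>[t\<^sub>0, t\<^sub>0 + \<delta>]\<close> is
  attained at \<open>\<xi>\<close>, both derivatives are at least \<open>c m\<close> on \<open>[t\<^sub>0, \<xi>]\<close>, so both components at \<open>\<xi>\<close> are
  at least \<open>c m \<delta> = m/2 > m\<close>.\<close>

lemma cooperative_nonneg_coeffs_preserves_nonneg:
  fixes a b a' b' :: "real \<Rightarrow> real" and qa qb qc qd :: real
  assumes da: "\<And>t. t \<ge> 0 \<Longrightarrow> (a has_real_derivative a' t) (at t within {0..})"
    and db: "\<And>t. t \<ge> 0 \<Longrightarrow> (b has_real_derivative b' t) (at t within {0..})"
    and ia: "\<And>t. t \<ge> 0 \<Longrightarrow> a' t \<ge> qa * a t + qb * b t"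
    and ib: "\<And>t. t \<ge> 0 \<Longrightarrow> b' t \<ge> qc * a t + qd * b t"
    and coeffs: "qa \<ge> 0" "qb \<ge> 0" "qc \<ge> 0" "qd \<ge> 0"
    and a0: "a 0 \<ge> 0" and b0: "b 0 \<ge> 0"
  shows "\<forall>t\<ge>0. a t \<ge> 0 \<and> b t \<ge> 0"
proof (rule ccontr)
  assume "\<not> (\<forall>t\<ge>0. a t \<ge> 0 \<and> b t \<ge> 0)"
  define F where "F = {t. t \<ge> 0 \<and> (a t < 0 \<or> b t < 0)}"
  have F_ne: "F \<noteq> {}" using \<open>\<not> _\<close> unfolding F_def by force
  have F_bdd: "bdd_below F" unfolding F_def by (rule bdd_belowI[of _ 0]) auto
  define t0 where "t0 = Inf F"
  have t0_ge: "t0 \<ge> 0" unfolding t0_def using F_ne by (rule cInf_greatest) (auto simp: F_def)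
  have before_t0: "a s \<ge> 0 \<and> b s \<ge> 0" if "0 \<le> s" "s < t0" for s
    using cInf_lower[OF _ F_bdd, of s] that unfolding t0_def F_def by force
  have cont_a: "continuous_on {0..} a" and cont_b: "continuous_on {0..} b"
    using DERIV_continuous_on[of "{0..}" a a'] DERIV_continuous_on[of "{0..}" b b'] da db
    by auto
  have a_t0: "a t0 \<ge> 0" and b_t0: "b t0 \<ge> 0"
    using nonneg_at_right_endpoint[OF continuous_on_subset[OF cont_a] t0_ge a0]
      nonneg_at_right_endpoint[OF continuous_on_subset[OF cont_b] t0_ge b0] before_t0
    by auto
  define c where "c = 1 + qa + qb + qc + qd"
  have c_pos: "c > 0" using coeffs unfolding c_def by simp
  define \<delta> where "\<delta> = 1 / (2 * c)"
  have \<delta>_pos: "\<delta> > 0" using c_pos unfolding \<delta>_def by simp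
  obtain s where "s \<in> F" and "s < t0 + \<delta>"
    using cInf_less_iff[OF F_ne F_bdd, of "t0 + \<delta>"] \<delta>_pos unfolding t0_def by auto
  have "s \<ge> t0" using cInf_lower[OF \<open>s \<in> F\<close> F_bdd] unfolding t0_def .
  have cont_min: "continuous_on {t0..t0+\<delta>} (\<lambda>t. min (a t) (b t))"
    by (intro continuous_intros continuous_on_subset[OF cont_a] continuous_on_subset[OF cont_b])
      (use t0_ge in auto)
  obtain \<xi> where \<xi>: "\<xi> \<in> {t0..t0+\<delta>}"
    and \<xi>_min: "\<And>y. y \<in> {t0..t0+\<delta>} \<Longrightarrow> min (a \<xi>) (b \<xi>) \<le> min (a y) (b y)"
    using continuous_attains_inf[OF compact_Icc _ cont_min] \<delta>_pos by auto
  define m where "m = min (a \<xi>) (b \<xi>)"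
  have m_neg: "m < 0"
    using \<xi>_min[of s] \<open>s \<ge> t0\<close> \<open>s < t0 + \<delta>\<close> \<open>s \<in> F\<close> unfolding m_def F_def by auto
  have "\<xi> > t0" using \<xi> m_neg a_t0 b_t0 unfolding m_def by (cases "\<xi> = t0") auto
  have above_m: "a y \<ge> m \<and> b y \<ge> m" if "t0 \<le> y" "y \<le> \<xi>" for y
    using \<xi>_min[of y] that \<xi> unfolding m_def by auto
  have half_m: "f \<xi> \<ge> m / 2"
    if df: "\<And>t. t \<ge> 0 \<Longrightarrow> (f has_real_derivative f' t) (at t within {0..})"
      and fi: "\<And>t. t \<ge> 0 \<Longrightarrow> f' t \<ge> q1 * a t + q2 * b t"
      and q: "q1 \<ge> 0" "q2 \<ge> 0" "q1 + q2 \<le> c" and "f t0 \<ge> 0"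
    for f f' :: "real \<Rightarrow> real" and q1 q2
  proof -
    have "f' t \<ge> c * m" if "t0 < t" "t < \<xi>" for t
    proof -
      have "q1 * a t + q2 * b t \<ge> q1 * m + q2 * m"
        using above_m[of t] that q by (intro add_mono mult_left_mono) auto
      moreover have "(q1 + q2) * m \<ge> c * m" using q m_neg by (intro mult_right_mono_neg) auto
      ultimately show ?thesis using fi[of t] that t0_ge by (simp add: algebra_simps)
    qed
    then have "f \<xi> \<ge> f t0 + c * m * (\<xi> - t0)"
      using ge_of_derivative_ge[OF \<open>\<xi> > t0\<close>, of f f'] df t0_ge
      by (meson DERIV_subset atLeastAtMost_iff atLeast_iff order.trans subsetI)
    moreover have "c * m * (\<xi> - t0) \<ge> c * m * \<delta>"
      using \<xi> m_neg c_pos by (intro mult_left_mono_neg) (auto simp: mult_le_0_iff)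
    moreover have "c * m * \<delta> = m / 2" unfolding \<delta>_def using c_pos by simp
    ultimately show ?thesis using \<open>f t0 \<ge> 0\<close> by linarith
  qed
  have "a \<xi> \<ge> m / 2" by (rule half_m[OF da ia]) (use coeffs a_t0 in \<open>auto simp: c_def\<close>)
  moreover have "b \<xi> \<ge> m / 2" by (rule half_m[OF db ib]) (use coeffs b_t0 in \<open>auto simp: c_def\<close>)
  ultimately show False using m_neg unfolding m_def by linarith
qed

text \<open>The diagonal coefficients may have any sign: multiplying both components by
  \<open>exp (r t)\<close> with \<open>r = |qa| + |qd|\<close> makes them nonnegative.\<close>

lemma cooperative_preserves_nonneg:
  fixes a b a' b' :: "real \<Rightarrow> real" and qa qb qc qd :: real
  assumes da: "\<And>t. t \<ge> 0 \<Longrightarrow> (a has_real_derivative a' t) (at t within {0..})"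
    and db: "\<And>t. t \<ge> 0 \<Longrightarrow> (b has_real_derivative b' t) (at t within {0..})"
    and ia: "\<And>t. t \<ge> 0 \<Longrightarrow> a' t \<ge> qa * a t + qb * b t"
    and ib: "\<And>t. t \<ge> 0 \<Longrightarrow> b' t \<ge> qc * a t + qd * b t"
    and "qb \<ge> 0" "qc \<ge> 0"
    and "a 0 \<ge> 0" "b 0 \<ge> 0"
  shows "\<forall>t\<ge>0. a t \<ge> 0 \<and> b t \<ge> 0"
proof -
  define r where "r = \<bar>qa\<bar> + \<bar>qd\<bar>"
  have weighted_deriv: "((\<lambda>t. f t * exp (r * t)) has_real_derivative
      (d + r * f t) * exp (r * t)) (at t within {0..})"
    if "(f has_real_derivative d) (at t within {0..})" for f :: "real \<Rightarrow> real" and d t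
    by (auto intro!: derivative_eq_intros that simp: algebra_simps)
  have weighted_bound: "(d + r * f t) * exp (r * t)
      \<ge> q1 * (a t * exp (r * t)) + q2 * (b t * exp (r * t))"
    if "d + r * f t \<ge> q1 * a t + q2 * b t" for f :: "real \<Rightarrow> real" and d q1 q2 t
    using mult_right_mono[OF that, of "exp (r * t)"] by (simp add: algebra_simps)
  have "\<forall>t\<ge>0. a t * exp (r * t) \<ge> 0 \<and> b t * exp (r * t) \<ge> 0"
  proof (rule cooperative_nonneg_coeffs_preserves_nonneg[where
        a' = "\<lambda>t. (a' t + r * a t) * exp (r * t)" and b' = "\<lambda>t. (b' t + r * b t) * exp (r * t)"
        and qa = "qa + r" and qb = qb and qc = qc and qd = "qd + r"])
    fix t :: real assume "t \<ge> 0"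
    show "((\<lambda>t. a t * exp (r * t)) has_real_derivative (a' t + r * a t) * exp (r * t))
        (at t within {0..})" by (rule weighted_deriv[OF da[OF \<open>t \<ge> 0\<close>]])
    show "((\<lambda>t. b t * exp (r * t)) has_real_derivative (b' t + r * b t) * exp (r * t))
        (at t within {0..})" by (rule weighted_deriv[OF db[OF \<open>t \<ge> 0\<close>]])
    show "(a' t + r * a t) * exp (r * t) \<ge> (qa + r) * (a t * exp (r * t)) + qb * (b t * exp (r * t))"
      using ia[OF \<open>t \<ge> 0\<close>] by (intro weighted_bound) (simp add: algebra_simps)
    show "(b' t + r * b t) * exp (r * t) \<ge> qc * (a t * exp (r * t)) + (qd + r) * (b t * exp (r * t))"
      using ib[OF \<open>t \<ge> 0\<close>] by (intro weighted_bound) (simp add: algebra_simps)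
  qed (use assms in \<open>auto simp: r_def\<close>)
  then show ?thesis by (simp add: zero_le_mult_iff)
qed

lemma INF_continuous_le:
  fixes f :: "real \<Rightarrow> real"
  assumes "continuous_on {a..b} f" and "w \<in> {a..b}"
  shows "(INF x\<in>{a..b}. f x) \<le> f w"
  by (rule cINF_lower[OF bounded_imp_bdd_below[OF compact_imp_bounded
        [OF compact_continuous_image[OF assms(1) compact_Icc]]] assms(2)])

text \<open>The saturations are dropped via \<open>V(D) \<le> \<kappa> (D - D\<^sub>s\<^sub>t)\<close> and \<open>W(v\<^sub>L) \<le> v\<^sub>L\<close>; what
  remains is the gain condition at the current \<open>v\<^sub>L\<close>.\<close>

lemma kd_TTC_derivative_ge:
  fixes \<gamma> :: "real \<Rightarrow> real"
  assumes "A \<ge> 0" "B \<ge> 0" "C \<le> 1" "P \<ge> 0"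
    and "aL \<ge> - \<gamma> vL" and "v \<in> {0..vbar}"
    and gain: "A * \<kappa> * (Dst - Dsf) + min 0 (B - kb) * vbar
        + ((kb - B + A) * vL - (1 - C) * \<gamma> vL) \<ge> 0"
  shows "kb * (vL - v) + aL - (kd A B C \<kappa> Dst vmax D v vL aL - P)
      \<ge> A * (kb - \<kappa>) * (D - Dsf) - A * (kb * (D - Dsf) + vL - v)"
proof -
  have "A * Vfun \<kappa> Dst vmax D \<le> A * (\<kappa> * (D - Dst))"
    using \<open>A \<ge> 0\<close> unfolding Vfun_def by (intro mult_left_mono) auto
  moreover have "B * Wfun vmax vL \<le> B * vL"
    using \<open>B \<ge> 0\<close> unfolding Wfun_def by (intro mult_left_mono) auto
  moreover have "(1 - C) * aL \<ge> (1 - C) * (- \<gamma> vL)"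
    using assms by (intro mult_left_mono) auto
  moreover have "(B - kb) * v \<ge> min 0 (B - kb) * vbar"
    using \<open>v \<in> {0..vbar}\<close>
    by (cases "B \<ge> kb") (auto intro: mult_left_mono_neg simp: min_def)
  ultimately show ?thesis
    using gain \<open>P \<ge> 0\<close> unfolding kd_def by (simp add: algebra_simps)
qed

theorem theorem4:
  fixes p \<gamma> :: "real \<Rightarrow> real"
    and A B C \<kappa> vmax Dst Dsf Tc vbar :: real
    and D v vL aL :: "real \<Rightarrow> real"
  assumes p_lip: "locally_lipschitz p" and p_nonneg: "\<And>s. p s \<ge> 0"
    and gains: "A \<ge> 0" "B \<ge> 0" "C \<ge> 0"
    and cst: "\<kappa> > 0" "vmax > 0" "Tc > 0"
    and dD: "\<And>t. t \<ge> 0 \<Longrightarrow> (D has_real_derivative (vL t - v t)) (at t within {0..})"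
    and dv: "\<And>t. t \<ge> 0 \<Longrightarrow> (v has_real_derivative
               (kd A B C \<kappa> Dst vmax (D t) (v t) (vL t) (aL t) - p (v t))) (at t within {0..})"
    and dvL: "\<And>t. t \<ge> 0 \<Longrightarrow> (vL has_real_derivative aL t) (at t within {0..})"
    and gK: "class_K \<gamma>"
    and aL_bound: "\<And>t. t \<ge> 0 \<Longrightarrow> aL t \<ge> - \<gamma> (vL t)"
    and vbar: "vbar \<ge> 0"
    and v_bd: "\<And>t. t \<ge> 0 \<Longrightarrow> v t \<in> {0..vbar}"
    and vL_bd: "\<And>t. t \<ge> 0 \<Longrightarrow> vL t \<in> {0..vbar}"
    and Dst_gt: "Dst > Dsf" and kbar_ge: "1 / Tc \<ge> \<kappa>" and C_le: "C \<le> 1"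
    and gain_cond: "A * \<kappa> * (Dst - Dsf) + min 0 (B - 1 / Tc) * vbar
        + (INF w\<in>{0..vbar}. (1 / Tc - B + A) * w - (1 - C) * \<gamma> w) \<ge> 0"
    and init: "S_D Dsf (D 0, v 0, vL 0)" "S_TTC (1 / Tc) Dsf (D 0, v 0, vL 0)"
  shows "\<forall>t\<ge>0. S_D Dsf (D t, v t, vL t) \<and> S_TTC (1 / Tc) Dsf (D t, v t, vL t)"
proof -
  define kb where "kb = 1 / Tc"
  have "continuous_on {0..vbar} \<gamma>"
    using gK unfolding class_K_def by (auto intro: continuous_on_subset)
  then have gain_at: "A * \<kappa> * (Dst - Dsf) + min 0 (B - kb) * vbar
      + ((kb - B + A) * w - (1 - C) * \<gamma> w) \<ge> 0" if "w \<in> {0..vbar}" for w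
    using gain_cond INF_continuous_le[of 0 vbar "\<lambda>w. (kb - B + A) * w - (1 - C) * \<gamma> w" w] that
    unfolding kb_def by (fastforce intro: continuous_intros)
  have "\<forall>t\<ge>0. D t - Dsf \<ge> 0 \<and> kb * (D t - Dsf) + vL t - v t \<ge> 0"
  proof (rule cooperative_preserves_nonneg[where qa = "- kb" and qb = 1
        and qc = "A * (kb - \<kappa>)" and qd = "- A"])
    show "((\<lambda>t. kb * (D t - Dsf) + vL t - v t) has_real_derivative
        kb * (vL t - v t) + aL t - (kd A B C \<kappa> Dst vmax (D t) (v t) (vL t) (aL t) - p (v t)))
        (at t within {0..})" if "t \<ge> 0" for t
      by (auto intro!: derivative_eq_intros dD dv dvL that)
    show "kb * (vL t - v t) + aL t - (kd A B C \<kappa> Dst vmax (D t) (v t) (vL t) (aL t) - p (v t))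
        \<ge> A * (kb - \<kappa>) * (D t - Dsf) + - A * (kb * (D t - Dsf) + vL t - v t)" if "t \<ge> 0" for t
      using kd_TTC_derivative_ge[where \<gamma> = \<gamma>, OF gains(1,2) C_le p_nonneg[of "v t"]
          aL_bound[OF that] v_bd[OF that] gain_at[OF vL_bd[OF that]]] by simp
  next
    show "((\<lambda>t. D t - Dsf) has_real_derivative vL t - v t) (at t within {0..})" if "t \<ge> 0" for t
      by (auto intro!: derivative_eq_intros dD that)
  next
    show "0 \<le> A * (kb - \<kappa>)" using gains kbar_ge unfolding kb_def by simp
  qed (use init in \<open>auto simp: S_D_def S_TTC_def algebra_simps simp flip: kb_def\<close>)
  then show ?thesis unfolding S_D_def S_TTC_def kb_def by simp
qed

end
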